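(* Let $N\ge1$, $K\ge2$ be integers with $K$ even and $N$ divisible by $K$, and let $\alpha\in[0,1)$. Put $K^*=\frac{NK}{2N+K}\left(1-\frac{\alpha}{2-\alpha}\right)$. Let $s\in S$ be a pure strategy such that the number of battlefields $k$ with $s_k>0$ is strictly less than $K^*$. Then $s$ is not used with positive probability in any Nash equilibrium of $\mathcal{B}_\alpha(N,K)$: for every Nash equilibrium $(\sigma^A,\sigma^B)$ one has $\sigma^A(s)=\sigma^B(s)=0$.
   Context: Fix integers $N\ge1$, $K\ge2$ and a real number $\alpha$. The Colonel Blotto game $\mathcal{B}_\alpha(N,K)$ is the two-player simultaneous-move game with players $A,B$, each with pure strategy set $S=\{s\in\{0,1,\ldots,N\}^K:\sum_{k=1}^K s_k=N\}$, in which the payoff of player $i$ at the pure profile $(s^i,s^{-i})$ is $\pi^i(s^i,s^{-i})=\sum_{k=1}^K\big(\mathbf 1[s^i_k>s^{-i}_k]+\tfrac{\alpha}{2}\mathbf 1[s^i_k=s^{-i}_k]\big)$. Mixed strategies are probability distributions on $S$, with expected payoffs under independent randomization; a Nash equilibrium is a mixed profile from which no unilateral deviation raises a player's expected payoff. *)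

theory Defs
  imports "HOL-Analysis.Analysis"
begin

definition blotto_S :: "nat \<Rightarrow> nat \<Rightarrow> (nat \<Rightarrow> nat) set" where
  "blotto_S N K = {s. (\<forall>k. K \<le> k \<longrightarrow> s k = 0) \<and> (\<Sum>k<K. s k) = N}"

definition blotto_payoff :: "real \<Rightarrow> nat \<Rightarrow> (nat \<Rightarrow> nat) \<Rightarrow> (nat \<Rightarrow> nat) \<Rightarrow> real" where
  "blotto_payoff \<alpha> K s t =
     (\<Sum>k<K. (if s k > t k then 1 else 0) + (if s k = t k then \<alpha> / 2 else 0))"

definition mixed_strategy :: "nat \<Rightarrow> nat \<Rightarrow> ((nat \<Rightarrow> nat) \<Rightarrow> real) \<Rightarrow> bool" where
  "mixed_strategy N K \<sigma> \<longleftrightarrow>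
     (\<forall>s. 0 \<le> \<sigma> s) \<and> (\<forall>s. s \<notin> blotto_S N K \<longrightarrow> \<sigma> s = 0) \<and>
     (\<Sum>s\<in>blotto_S N K. \<sigma> s) = 1"

definition expected_payoff ::
  "real \<Rightarrow> nat \<Rightarrow> nat \<Rightarrow> ((nat \<Rightarrow> nat) \<Rightarrow> real) \<Rightarrow> ((nat \<Rightarrow> nat) \<Rightarrow> real) \<Rightarrow> real" where
  "expected_payoff \<alpha> N K \<sigma> \<tau> =
     (\<Sum>s\<in>blotto_S N K. \<Sum>t\<in>blotto_S N K. \<sigma> s * \<tau> t * blotto_payoff \<alpha> K s t)"

definition nash_equilibrium ::
  "real \<Rightarrow> nat \<Rightarrow> nat \<Rightarrow> ((nat \<Rightarrow> nat) \<Rightarrow> real) \<Rightarrow> ((nat \<Rightarrow> nat) \<Rightarrow> real) \<Rightarrow> bool" where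
  "nash_equilibrium \<alpha> N K \<sigma>A \<sigma>B \<longleftrightarrow>
     mixed_strategy N K \<sigma>A \<and> mixed_strategy N K \<sigma>B \<and>
     (\<forall>\<rho>. mixed_strategy N K \<rho> \<longrightarrow>
        expected_payoff \<alpha> N K \<rho> \<sigma>B \<le> expected_payoff \<alpha> N K \<sigma>A \<sigma>B) \<and>
     (\<forall>\<rho>. mixed_strategy N K \<rho> \<longrightarrow>
        expected_payoff \<alpha> N K \<rho> \<sigma>A \<le> expected_payoff \<alpha> N K \<sigma>B \<sigma>A)"

end

theory Submission
  imports Defs
begin

text \<open>With \<open>N = c K\<close>, the \<open>2c + 1\<close> alternating allocations that put \<open>j\<close> troops on the even
  and \<open>2c - j\<close> on the odd battlefields (\<open>j = 0, \<dots>, 2c\<close>) place, on each battlefield, every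
  troop number \<open>0, \<dots>, 2c\<close> exactly once. Hence against any allocation \<open>t\<close> their payoffs sum
  to at least \<open>\<Sum>\<^sub>k (2c + \<alpha>/2 - t\<^sub>k) = K (c + \<alpha>/2)\<close>, and the uniform mixture over them earns
  at least \<open>K (c + \<alpha>/2) / (2c + 1)\<close> against every mixed strategy. A pure strategy with
  \<open>m\<close> active battlefields earns at most \<open>m + \<alpha>/2 (K - m)\<close>, which the hypothesis on \<open>m\<close>
  makes strictly smaller; so it is never a best response and carries no weight in an
  equilibrium.\<close>

lemma finite_blotto_S: "finite (blotto_S N K)"
proof (rule finite_subset)
  let ?extend = "\<lambda>xs k. if k < K then xs ! k else 0"
  show "blotto_S N K \<subseteq> ?extend ` {xs. set xs \<subseteq> {0..N} \<and> length xs = K}"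
  proof
    fix s assume s: "s \<in> blotto_S N K"
    have "s k \<le> N" if "k < K" for k
      using s member_le_sum[of k "{..<K}" s] that unfolding blotto_S_def by auto
    moreover have "s = ?extend (map s [0..<K])"
      using s unfolding blotto_S_def by (auto simp: fun_eq_iff)
    ultimately show "s \<in> ?extend ` {xs. set xs \<subseteq> {0..N} \<and> length xs = K}"
      by (intro image_eqI[of s]) auto
  qed
  show "finite (?extend ` {xs. set xs \<subseteq> {0..N} \<and> length xs = K})"
    by (intro finite_imageI finite_lists_length_eq) auto
qed

definition pure_payoff ::
  "real \<Rightarrow> nat \<Rightarrow> nat \<Rightarrow> ((nat \<Rightarrow> nat) \<Rightarrow> real) \<Rightarrow> (nat \<Rightarrow> nat) \<Rightarrow> real" where
  "pure_payoff \<alpha> N K \<tau> s = (\<Sum>t\<in>blotto_S N K. \<tau> t * blotto_payoff \<alpha> K s t)"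

lemma expected_payoff_eq_sum_pure_payoff:
  "expected_payoff \<alpha> N K \<sigma> \<tau> = (\<Sum>s\<in>blotto_S N K. \<sigma> s * pure_payoff \<alpha> N K \<tau> s)"
  unfolding expected_payoff_def pure_payoff_def sum_distrib_left
  by (simp add: mult.assoc)

lemma sum_mixed_strategy_const:
  assumes "mixed_strategy N K \<tau>"
  shows "(\<Sum>t\<in>blotto_S N K. \<tau> t * a) = a"
  using assms unfolding mixed_strategy_def by (simp add: sum_distrib_right[symmetric])

lemma blotto_payoff_le_active:
  fixes K :: nat and s t :: "nat \<Rightarrow> nat"
  assumes "0 \<le> \<alpha>" "\<alpha> \<le> 2"
  defines "m \<equiv> real (card {k. k < K \<and> s k > 0})"
  shows "blotto_payoff \<alpha> K s t \<le> m + \<alpha>/2 * (real K - m)"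
proof -
  let ?A = "{k. k < K \<and> s k > 0}"
  have active: "{..<K} \<inter> {k. 0 < s k} = ?A" and inactive: "{..<K} \<inter> - {k. 0 < s k} = {..<K} - ?A"
    by auto
  have "card ?A \<le> K"
    using card_mono[of "{..<K}" ?A] by auto
  moreover have "card ({..<K} - ?A) = K - card ?A"
    by (subst card_Diff_subset) auto
  ultimately have card_inactive: "real (card ({..<K} - ?A)) = real K - m"
    unfolding m_def by (metis of_nat_diff)
  have "blotto_payoff \<alpha> K s t \<le> (\<Sum>k<K. if s k > 0 then 1 else \<alpha>/2)"
    unfolding blotto_payoff_def using assms by (intro sum_mono) auto
  also have "\<dots> = m + \<alpha>/2 * (real K - m)"
    unfolding sum.If_cases[OF finite_lessThan] active inactive
    by (simp add: m_def[symmetric] card_inactive)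
  finally show ?thesis .
qed

lemma pure_payoff_le_active:
  fixes N K :: nat and s :: "nat \<Rightarrow> nat"
  assumes "0 \<le> \<alpha>" "\<alpha> \<le> 2" "mixed_strategy N K \<tau>"
  defines "m \<equiv> real (card {k. k < K \<and> s k > 0})"
  shows "pure_payoff \<alpha> N K \<tau> s \<le> m + \<alpha>/2 * (real K - m)"
proof -
  have "pure_payoff \<alpha> N K \<tau> s \<le> (\<Sum>t\<in>blotto_S N K. \<tau> t * (m + \<alpha>/2 * (real K - m)))"
    unfolding pure_payoff_def m_def using assms blotto_payoff_le_active
    unfolding mixed_strategy_def by (intro sum_mono mult_left_mono) auto
  then show ?thesis
    using sum_mixed_strategy_const[OF assms(3)] by simp
qed

text \<open>Moving the weight of \<open>s\<close> from \<open>\<sigma>\<close> onto \<open>\<rho>\<close> changes the payoff by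
  \<open>\<sigma> s * (expected_payoff \<rho> - pure_payoff s)\<close>.\<close>

lemma best_response_vanishes_on_dominated:
  assumes \<sigma>: "mixed_strategy N K \<sigma>" and \<rho>: "mixed_strategy N K \<rho>"
    and best: "\<forall>\<rho>'. mixed_strategy N K \<rho>' \<longrightarrow>
                 expected_payoff \<alpha> N K \<rho>' \<tau> \<le> expected_payoff \<alpha> N K \<sigma> \<tau>"
    and s: "s \<in> blotto_S N K"
    and dominated: "pure_payoff \<alpha> N K \<tau> s < expected_payoff \<alpha> N K \<rho> \<tau>"
  shows "\<sigma> s = 0"
proof -
  let ?S = "blotto_S N K"
  let ?F = "pure_payoff \<alpha> N K \<tau>"
  define \<sigma>' where "\<sigma>' = (\<lambda>x. \<sigma> x - (if x = s then \<sigma> s else 0) + \<sigma> s * \<rho> x)"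
  have weight_s: "(\<Sum>x\<in>?S. (if x = s then \<sigma> s else 0) * g x) = \<sigma> s * g s"
    for g :: "(nat \<Rightarrow> nat) \<Rightarrow> real"
    using finite_blotto_S s by (simp add: if_distrib[of "\<lambda>a. a * _"] cong: if_cong)
  have "(\<Sum>x\<in>?S. \<sigma>' x) = 1"
    using weight_s[of "\<lambda>_. 1"] \<sigma> \<rho> unfolding \<sigma>'_def mixed_strategy_def
    by (simp add: sum.distrib sum_subtractf sum_distrib_left[symmetric])
  then have "mixed_strategy N K \<sigma>'"
    using \<sigma> \<rho> s unfolding mixed_strategy_def \<sigma>'_def by auto
  moreover have "expected_payoff \<alpha> N K \<sigma>' \<tau> =
      (\<Sum>x\<in>?S. \<sigma> x * ?F x) - (\<Sum>x\<in>?S. (if x = s then \<sigma> s else 0) * ?F x)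
        + \<sigma> s * (\<Sum>x\<in>?S. \<rho> x * ?F x)"
    unfolding expected_payoff_eq_sum_pure_payoff \<sigma>'_def
    by (simp add: algebra_simps sum.distrib sum_subtractf sum_distrib_left)
  then have "expected_payoff \<alpha> N K \<sigma>' \<tau> = expected_payoff \<alpha> N K \<sigma> \<tau> +
      \<sigma> s * (expected_payoff \<alpha> N K \<rho> \<tau> - ?F s)"
    unfolding weight_s expected_payoff_eq_sum_pure_payoff by (simp add: algebra_simps)
  ultimately have "\<sigma> s * (expected_payoff \<alpha> N K \<rho> \<tau> - pure_payoff \<alpha> N K \<tau> s) \<le> 0"
    using best by fastforce
  with dominated have "\<sigma> s \<le> 0"
    by (simp add: mult_le_0_iff)
  then show ?thesis
    using \<sigma> unfolding mixed_strategy_def by (simp add: order_antisym)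
qed

definition uniform_strategy :: "(nat \<Rightarrow> nat) set \<Rightarrow> (nat \<Rightarrow> nat) \<Rightarrow> real" where
  "uniform_strategy R = (\<lambda>x. if x \<in> R then 1 / real (card R) else 0)"

lemma sum_uniform_strategy:
  assumes "R \<subseteq> blotto_S N K"
  shows "(\<Sum>x\<in>blotto_S N K. uniform_strategy R x * g x) = (\<Sum>x\<in>R. g x) / real (card R)"
proof -
  have "(\<Sum>x\<in>blotto_S N K. uniform_strategy R x * g x) =
        (\<Sum>x\<in>blotto_S N K. if x \<in> R then g x / real (card R) else 0)"
    unfolding uniform_strategy_def by (intro sum.cong) auto
  also have "\<dots> = (\<Sum>x\<in>R. g x / real (card R))"
    using finite_blotto_S assms by (simp add: sum.If_cases Int_absorb1)
  finally show ?thesis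
    by (simp add: sum_divide_distrib)
qed

lemma mixed_strategy_uniform:
  assumes "R \<subseteq> blotto_S N K" "R \<noteq> {}"
  shows "mixed_strategy N K (uniform_strategy R)"
proof -
  have "finite R"
    using assms(1) finite_blotto_S by (rule finite_subset)
  then show ?thesis
    using sum_uniform_strategy[OF assms(1), of "\<lambda>_. 1"] assms
    unfolding mixed_strategy_def uniform_strategy_def by auto
qed

lemma expected_payoff_uniform:
  assumes "R \<subseteq> blotto_S N K"
  shows "expected_payoff \<alpha> N K (uniform_strategy R) \<tau> =
           (\<Sum>x\<in>R. pure_payoff \<alpha> N K \<tau> x) / real (card R)"
  unfolding expected_payoff_eq_sum_pure_payoff using assms by (rule sum_uniform_strategy)

definition alternating_allocation :: "nat \<Rightarrow> nat \<Rightarrow> nat \<Rightarrow> nat \<Rightarrow> nat" where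
  "alternating_allocation K c j k = (if k < K then if even k then j else 2 * c - j else 0)"

lemma alternating_allocation_in_blotto_S:
  assumes "even K" "j \<le> 2 * c"
  shows "alternating_allocation K c j \<in> blotto_S (c * K) K"
proof -
  obtain h where K: "K = 2 * h"
    using assms(1) by blast
  have "(\<Sum>k<2 * h. if even k then a else b) = h * (a + b)" for a b :: nat
    by (induction h) auto
  then have "(\<Sum>k<K. alternating_allocation K c j k) = h * (2 * c)"
    using assms(2) unfolding K alternating_allocation_def by simp
  then show ?thesis
    unfolding blotto_S_def alternating_allocation_def K by simp
qed

lemma inj_alternating_allocation:
  assumes "0 < K"
  shows "inj (alternating_allocation K c)"
  using assms unfolding inj_def alternating_allocation_def by (metis even_zero)

lemma sum_battlefield_payoff_ge:
  fixes \<alpha> :: real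
  assumes "\<alpha> \<le> 2"
  shows "(\<Sum>x\<le>n. (if x > y then 1 else 0) + (if x = y then \<alpha>/2 else 0)) \<ge> real n + \<alpha>/2 - real y"
proof -
  have "(\<Sum>x\<le>n. (if x > y then 1 else 0) + (if x = y then \<alpha>/2 else 0)) =
          (if y \<le> n then real (n - y) + \<alpha>/2 else 0)"
    by (induction n) (auto simp: le_Suc_eq)
  then show ?thesis
    using assms by (simp add: of_nat_diff)
qed

lemma sum_alternating_payoff_ge:
  assumes "\<alpha> \<le> 2" "(\<Sum>k<K. t k) = c * K"
  shows "(\<Sum>j\<le>2 * c. blotto_payoff \<alpha> K (alternating_allocation K c j) t) \<ge> real K * (real c + \<alpha>/2)"
proof -
  let ?win = "\<lambda>x y. (if x > y then 1 else 0) + (if x = y then \<alpha>/2 else (0::real))"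
  have flip: "(\<Sum>j\<le>2 * c. ?win (2 * c - j) y) = (\<Sum>x\<le>2 * c. ?win x y)" for y
    using sum.atLeastAtMost_rev[of "\<lambda>x. ?win x y" 0 "2 * c"] by (simp add: atLeast0AtMost)
  have "(\<Sum>j\<le>2 * c. blotto_payoff \<alpha> K (alternating_allocation K c j) t) =
          (\<Sum>k<K. \<Sum>j\<le>2 * c. ?win (alternating_allocation K c j k) (t k))"
    unfolding blotto_payoff_def by (rule sum.swap)
  also have "\<dots> = (\<Sum>k<K. \<Sum>x\<le>2 * c. ?win x (t k))"
  proof (rule sum.cong[OF refl])
    fix k assume "k \<in> {..<K}"
    then show "(\<Sum>j\<le>2 * c. ?win (alternating_allocation K c j k) (t k)) = (\<Sum>x\<le>2 * c. ?win x (t k))"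
      using flip by (cases "even k") (simp_all add: alternating_allocation_def)
  qed
  also have "\<dots> \<ge> (\<Sum>k<K. real (2 * c) + \<alpha>/2 - real (t k))"
    by (intro sum_mono sum_battlefield_payoff_ge assms(1))
  moreover have "(\<Sum>k<K. real (t k)) = real c * real K"
    using assms(2) by (metis of_nat_mult of_nat_sum)
  then have "(\<Sum>k<K. real (2 * c) + \<alpha>/2 - real (t k)) = real K * (real c + \<alpha>/2)"
    by (simp add: sum_subtractf algebra_simps)
  ultimately show ?thesis
    by linarith
qed

lemma expected_payoff_uniform_alternating_ge:
  fixes N K c :: nat
  assumes "0 < K" "even K" "N = c * K" "\<alpha> \<le> 2" "mixed_strategy N K \<tau>"
  defines "R \<equiv> alternating_allocation K c ` {..2 * c}"
  shows "mixed_strategy N K (uniform_strategy R)"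
    and "expected_payoff \<alpha> N K (uniform_strategy R) \<tau> \<ge> real K * (real c + \<alpha>/2) / (2 * real c + 1)"
proof -
  let ?S = "blotto_S N K"
  have RS: "R \<subseteq> ?S"
    unfolding R_def assms(3) using alternating_allocation_in_blotto_S[OF assms(2)] by auto
  have inj: "inj_on (alternating_allocation K c) {..2 * c}"
    using inj_alternating_allocation[OF assms(1)] by (simp add: inj_on_def inj_def)
  then have card_R: "real (card R) = 2 * real c + 1"
    unfolding R_def by (simp add: card_image)
  then show "mixed_strategy N K (uniform_strategy R)"
    using RS by (intro mixed_strategy_uniform) auto
  have "real K * (real c + \<alpha>/2) = (\<Sum>t\<in>?S. \<tau> t * (real K * (real c + \<alpha>/2)))"
    using sum_mixed_strategy_const[OF assms(5)] by simp
  also have "\<dots> \<le> (\<Sum>t\<in>?S. \<tau> t * (\<Sum>j\<le>2 * c. blotto_payoff \<alpha> K (alternating_allocation K c j) t))"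
    using assms(3-5) sum_alternating_payoff_ge unfolding mixed_strategy_def blotto_S_def
    by (intro sum_mono mult_left_mono) auto
  also have "\<dots> = (\<Sum>x\<in>R. pure_payoff \<alpha> N K \<tau> x)"
    unfolding R_def pure_payoff_def sum.reindex[OF inj] sum_distrib_left comp_def
    by (rule sum.swap)
  finally show "expected_payoff \<alpha> N K (uniform_strategy R) \<tau> \<ge>
                  real K * (real c + \<alpha>/2) / (2 * real c + 1)"
    unfolding expected_payoff_uniform[OF RS] card_R by (rule divide_right_mono) simp
qed

lemma threshold_iff_dominated:
  fixes m k c \<alpha> :: real
  assumes "0 \<le> c" "\<alpha> < 2"
  shows "m < c * k / (2 * c + 1) * (1 - \<alpha> / (2 - \<alpha>)) \<longleftrightarrow>
           m + \<alpha>/2 * (k - m) < k * (c + \<alpha>/2) / (2 * c + 1)"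
proof -
  have "(1 - \<alpha>/2) * (1 - \<alpha> / (2 - \<alpha>)) = 1 - \<alpha>"
    using assms(2) by (simp add: field_simps)
  moreover have "k * (c + \<alpha>/2) / (2 * c + 1) - (m + \<alpha>/2 * (k - m)) =
          c * k / (2 * c + 1) * (1 - \<alpha>) - (1 - \<alpha>/2) * m"
    using assms(1) by (simp add: field_simps)
  moreover have "a * (x * b - m) = x * (a * b) - a * m" for a b x :: real
    by (simp add: algebra_simps)
  ultimately have "k * (c + \<alpha>/2) / (2 * c + 1) - (m + \<alpha>/2 * (k - m)) =
          (1 - \<alpha>/2) * (c * k / (2 * c + 1) * (1 - \<alpha> / (2 - \<alpha>)) - m)"
    by metis
  moreover have "0 < 1 - \<alpha>/2"
    using assms(2) by simp
  ultimately show ?thesis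
    by (smt (verit) mult_pos_pos mult_le_0_iff)
qed

lemma blotto_threshold_eq:
  assumes "0 < K" "N = c * K"
  shows "real (N * K) / real (2 * N + K) = real c * real K / (2 * real c + 1)"
proof -
  have "real (N * K) / real (2 * N + K) = real c * real K * real K / ((2 * real c + 1) * real K)"
    unfolding assms(2) by (simp add: algebra_simps)
  then show ?thesis
    using assms(1) by simp
qed

lemma best_response_vanishes_on_few_active:
  fixes N K c :: nat and s :: "nat \<Rightarrow> nat"
  assumes "0 < K" "even K" "N = c * K" "0 \<le> \<alpha>" "\<alpha> \<le> 2"
    and \<sigma>: "mixed_strategy N K \<sigma>" and \<tau>: "mixed_strategy N K \<tau>"
    and best: "\<forall>\<rho>. mixed_strategy N K \<rho> \<longrightarrow> expected_payoff \<alpha> N K \<rho> \<tau> \<le> expected_payoff \<alpha> N K \<sigma> \<tau>"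
    and s: "s \<in> blotto_S N K"
  defines "m \<equiv> real (card {k. k < K \<and> s k > 0})"
  assumes few_active: "m + \<alpha>/2 * (real K - m) < real K * (real c + \<alpha>/2) / (2 * real c + 1)"
  shows "\<sigma> s = 0"
proof -
  note alternating = expected_payoff_uniform_alternating_ge[OF assms(1-3,5) \<tau>]
  have "pure_payoff \<alpha> N K \<tau> s <
          expected_payoff \<alpha> N K (uniform_strategy (alternating_allocation K c ` {..2 * c})) \<tau>"
    using pure_payoff_le_active[OF assms(4,5) \<tau>, of s] few_active alternating(2)
    unfolding m_def by linarith
  then show ?thesis
    by (rule best_response_vanishes_on_dominated[OF \<sigma> alternating(1) best s])
qed

theorem proposition3:
  fixes N K :: nat and \<alpha> :: real and s :: "nat \<Rightarrow> nat"
    and \<sigma>A \<sigma>B :: "(nat \<Rightarrow> nat) \<Rightarrow> real"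
  assumes "N \<ge> 1" and "K \<ge> 2" and "even K" and "K dvd N"
    and "0 \<le> \<alpha>" and "\<alpha> < 1"
    and "s \<in> blotto_S N K"
    and "real (card {k. k < K \<and> s k > 0}) <
           real (N * K) / real (2 * N + K) * (1 - \<alpha> / (2 - \<alpha>))"
    and "nash_equilibrium \<alpha> N K \<sigma>A \<sigma>B"
  shows "\<sigma>A s = 0 \<and> \<sigma>B s = 0"
proof -
  obtain c where N: "N = c * K"
    using \<open>K dvd N\<close> by (metis dvdE mult.commute)
  have K: "0 < K" and \<alpha>: "\<alpha> \<le> 2"
    using \<open>K \<ge> 2\<close> \<open>\<alpha> < 1\<close> by simp_all
  let ?m = "real (card {k. k < K \<and> s k > 0})"
  have "?m + \<alpha>/2 * (real K - ?m) < real K * (real c + \<alpha>/2) / (2 * real c + 1)"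
    using threshold_iff_dominated[of "real c" \<alpha> ?m "real K"] \<open>\<alpha> < 1\<close>
      assms(8)[unfolded blotto_threshold_eq[OF K N]] by simp
  then show ?thesis
    using best_response_vanishes_on_few_active[OF K \<open>even K\<close> N \<open>0 \<le> \<alpha>\<close> \<alpha> _ _ _ \<open>s \<in> blotto_S N K\<close>]
      assms(9) unfolding nash_equilibrium_def by blast
qed

end
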